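(* Let $\mathcal{C}$ be a non-attacking configuration. Then there exists a constant $\mu$ such that $\mathrm{inloss}_n(\mathcal{C}) \le \mu$ for all $n \in \mathbb{N}$.
   Context: For $n \in \mathbb{N}$ let $I_n = \{\lfloor (2-n)/2 \rfloor, \ldots, \lfloor n/2 \rfloor\}$ and $\mathcal{B}_n = I_n \times I_n$. A configuration is a finite set $\mathcal{C} \subset \mathbb{Z}\times\mathbb{Z}$. For $Q=(x,y)$, $A(Q) = \{(x+i,y),(x,y+i),(x+i,y+i),(x+i,y-i) : i \in \mathbb{Z}\setminus\{0\}\}$ and $A(\mathcal{C}) = \bigcup_{Q\in\mathcal{C}} A(Q)$. $\mathcal{C}$ is non-attacking if $Q'\notin A(Q)$ for all distinct $Q,Q'\in\mathcal{C}$. The attacking number of $s \in \mathbb{Z}^2$ is $a_{\mathcal{C}}(s) = \#\{Q \in \mathcal{C} : s \in A(Q)\}$, and the internal loss is $\mathrm{inloss}_n(\mathcal{C}) = \sum_{s \in A(\mathcal{C})\cap\mathcal{B}_n} (a_{\mathcal{C}}(s) - 1)$. *)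

theory Defs
  imports Complex_Main
begin

definition I_set :: "nat \<Rightarrow> int set" where
  "I_set n = {\<lfloor>(2 - real n) / 2\<rfloor> .. \<lfloor>real n / 2\<rfloor>}"

definition board :: "nat \<Rightarrow> (int \<times> int) set" where
  "board n = I_set n \<times> I_set n"

definition attacks :: "int \<times> int \<Rightarrow> (int \<times> int) set" where
  "attacks Q = (case Q of (x, y) \<Rightarrow>
     {(x + i, y) | i. i \<noteq> 0} \<union> {(x, y + i) | i. i \<noteq> 0} \<union>
     {(x + i, y + i) | i. i \<noteq> 0} \<union> {(x + i, y - i) | i. i \<noteq> 0})"

definition attacked :: "(int \<times> int) set \<Rightarrow> (int \<times> int) set" where
  "attacked C = (\<Union>Q\<in>C. attacks Q)"

definition configuration :: "(int \<times> int) set \<Rightarrow> bool" where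
  "configuration C \<longleftrightarrow> finite C"

definition non_attacking :: "(int \<times> int) set \<Rightarrow> bool" where
  "non_attacking C \<longleftrightarrow> (\<forall>Q\<in>C. \<forall>Q'\<in>C. Q \<noteq> Q' \<longrightarrow> Q' \<notin> attacks Q)"

definition attacking_number :: "(int \<times> int) set \<Rightarrow> int \<times> int \<Rightarrow> nat" where
  "attacking_number C s = card {Q \<in> C. s \<in> attacks Q}"

definition inloss :: "nat \<Rightarrow> (int \<times> int) set \<Rightarrow> int" where
  "inloss n C = (\<Sum>s \<in> attacked C \<inter> board n. int (attacking_number C s) - 1)"

end

theory Submission
  imports Defs
begin

text \<open>A square attacked by two queens lies on an attack line of each. Since the queens do not
attack each other, no attack line of one passes through the other, so two parallel such lines are
disjoint and two non-parallel ones meet in at most one point. Hence the squares attacked more than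
once lie in a fixed box; squares attacked once contribute nothing to the internal loss and the
others at most the number of queens each, whatever the board size.\<close>

lemma mem_attacks_iff:
  "(a, b) \<in> attacks (x, y) \<longleftrightarrow>
     (a, b) \<noteq> (x, y) \<and> (a = x \<or> b = y \<or> a - b = x - y \<or> a + b = x + y)"
proof
  assume "(a, b) \<in> attacks (x, y)"
  then show "(a, b) \<noteq> (x, y) \<and> (a = x \<or> b = y \<or> a - b = x - y \<or> a + b = x + y)"
    unfolding attacks_def by auto
next
  assume "(a, b) \<noteq> (x, y) \<and> (a = x \<or> b = y \<or> a - b = x - y \<or> a + b = x + y)"
  then consider "a = x" "b - y \<noteq> 0" | "b = y" "a - x \<noteq> 0"
    | "a - b = x - y" "a - x \<noteq> 0" | "a + b = x + y" "a - x \<noteq> 0"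
    by fastforce
  then show "(a, b) \<in> attacks (x, y)"
  proof cases
    case 1
    then show ?thesis unfolding attacks_def by (auto intro!: exI[of _ "b - y"])
  next
    case 2
    then show ?thesis unfolding attacks_def by (auto intro!: exI[of _ "a - x"])
  next
    case 3
    then show ?thesis unfolding attacks_def by (auto intro!: exI[of _ "a - x"])
  next
    case 4
    then show ?thesis unfolding attacks_def by (auto intro!: exI[of _ "a - x"])
  qed
qed

lemma common_attacks_subset_box:
  assumes "Q \<noteq> Q'" and "Q' \<notin> attacks Q"
  defines "R \<equiv> \<bar>fst Q\<bar> + \<bar>snd Q\<bar> + \<bar>fst Q'\<bar> + \<bar>snd Q'\<bar>"
  shows "attacks Q \<inter> attacks Q' \<subseteq> {-R..R} \<times> {-R..R}"
proof
  fix s assume s: "s \<in> attacks Q \<inter> attacks Q'"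
  obtain x y x' y' a b where Q: "Q = (x, y)" and Q': "Q' = (x', y')" and s_eq: "s = (a, b)"
    by (cases Q, cases Q', cases s) auto
  have line: "a = x \<or> b = y \<or> a - b = x - y \<or> a + b = x + y"
    and line': "a = x' \<or> b = y' \<or> a - b = x' - y' \<or> a + b = x' + y'"
    using s by (simp_all add: Q Q' s_eq mem_attacks_iff)
  have "x' \<noteq> x" "y' \<noteq> y" "x' - y' \<noteq> x - y" "x' + y' \<noteq> x + y"
    using assms(1,2) by (auto simp: Q Q' mem_attacks_iff)
  with line line' have "\<bar>a\<bar> \<le> R \<and> \<bar>b\<bar> \<le> R"
    unfolding R_def Q Q' by (elim disjE) auto
  then show "s \<in> {-R..R} \<times> {-R..R}"
    by (simp add: s_eq abs_le_iff)
qed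

lemma finite_common_attacks:
  "Q \<noteq> Q' \<Longrightarrow> Q' \<notin> attacks Q \<Longrightarrow> finite (attacks Q \<inter> attacks Q')"
  by (rule finite_subset[OF common_attacks_subset_box]) auto

definition multiply_attacked :: "(int \<times> int) set \<Rightarrow> (int \<times> int) set" where
  "multiply_attacked C = {s. 1 < attacking_number C s}"

lemma multiply_attacked_subset:
  assumes "finite C"
  shows "multiply_attacked C \<subseteq> (\<Union>Q\<in>C. \<Union>Q'\<in>C - {Q}. attacks Q \<inter> attacks Q')"
proof
  fix s assume "s \<in> multiply_attacked C"
  then have "\<not> card {Q \<in> C. s \<in> attacks Q} \<le> Suc 0"
    by (simp add: multiply_attacked_def attacking_number_def)
  then obtain Q Q' where "Q \<in> C" "Q' \<in> C" "Q \<noteq> Q'" "s \<in> attacks Q" "s \<in> attacks Q'"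
    using assms by (auto simp: card_le_Suc0_iff_eq)
  then show "s \<in> (\<Union>Q\<in>C. \<Union>Q'\<in>C - {Q}. attacks Q \<inter> attacks Q')"
    by blast
qed

lemma finite_multiply_attacked:
  assumes "finite C" and "non_attacking C"
  shows "finite (multiply_attacked C)"
proof (rule finite_subset[OF multiply_attacked_subset[OF assms(1)]])
  show "finite (\<Union>Q\<in>C. \<Union>Q'\<in>C - {Q}. attacks Q \<inter> attacks Q')"
    using assms by (intro finite_UN_I finite_common_attacks) (auto simp: non_attacking_def)
qed

lemma attacking_number_le_card:
  "finite C \<Longrightarrow> attacking_number C s \<le> card C"
  unfolding attacking_number_def by (rule card_mono) auto

lemma finite_board: "finite (board n)"
  by (simp add: board_def I_set_def)

lemma inloss_le_card_multiply_attacked: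
  assumes "finite C" and "finite (multiply_attacked C)"
  shows "inloss n C \<le> int (card (multiply_attacked C)) * int (card C)"
proof -
  let ?X = "attacked C \<inter> board n" and ?M = "multiply_attacked C"
  let ?loss = "\<lambda>s. int (attacking_number C s) - 1"
  have "inloss n C = (\<Sum>s\<in>?X \<inter> ?M. ?loss s) + (\<Sum>s\<in>?X - ?M. ?loss s)"
    unfolding inloss_def using finite_board by (intro sum.Int_Diff) auto
  also have "(\<Sum>s\<in>?X - ?M. ?loss s) \<le> 0"
    by (intro sum_nonpos) (simp add: multiply_attacked_def)
  also have "(\<Sum>s\<in>?X \<inter> ?M. ?loss s) \<le> int (card (?X \<inter> ?M)) * int (card C)"
    using attacking_number_le_card[OF assms(1)] by (intro sum_bounded_above) (smt (verit) of_nat_mono)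
  also have "\<dots> \<le> int (card ?M) * int (card C)"
    using assms(2) by (intro mult_right_mono) (auto intro: card_mono)
  finally show ?thesis by simp
qed

theorem mainTheorem4:
  fixes C :: "(int \<times> int) set"
  assumes "configuration C" and "non_attacking C"
  shows "\<exists>\<mu>::int. \<forall>n::nat. inloss n C \<le> \<mu>"
proof -
  have "finite C"
    using assms(1) by (simp add: configuration_def)
  then have "\<forall>n. inloss n C \<le> int (card (multiply_attacked C)) * int (card C)"
    using finite_multiply_attacked[OF _ assms(2)] inloss_le_card_multiply_attacked by blast
  then show ?thesis ..
qed
end
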